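(* Let $\rho$ be the standard representation of $\mathfrak{sl}_2(\mathbb R)$ on $V=\mathbb R^2$, with $\mathfrak{sl}_2$ metrized by $B(x,y)=\mathrm{tr}(xy)$, whose Casimir tensor is $C=\tfrac12 H\otimes H+E\otimes F+F\otimes E$, where $H=\begin{pmatrix}1&0\\0&-1\end{pmatrix}$, $E=\begin{pmatrix}0&1\\0&0\end{pmatrix}$, $F=\begin{pmatrix}0&0\\1&0\end{pmatrix}$. Then the weight tensor $(\rho\otimes\rho)(C)\in\mathrm{End}(V)\otimes\mathrm{End}(V)$ cannot be realized on a symmetric space: there is no locally symmetric space $(M,g)$, point $p\in M$ and linear isomorphism $\phi:V\to T_pM$ whose induced isomorphism $\mathrm{End}(V)\otimes\mathrm{End}(V)\to\mathrm{End}(T_pM)\otimes\mathrm{End}(T_pM)$ maps $(\rho\otimes\rho)(C)$ to $\hat R_p$.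
   Context: A locally symmetric space is a connected pseudo-Riemannian manifold $(M,g)$ whose Levi-Civita connection has parallel curvature $\nabla R=0$, with $R(X,Y)Z=\nabla_X\nabla_YZ-\nabla_Y\nabla_XZ-\nabla_{[X,Y]}Z$. In a frame, $R(e_a,e_b)e_c=R^d_{abc}e_d$, $g^{ab}$ is the inverse metric, repeated indices summed, and $\hat R_p=\sum\hat R^{bd}_{ac}(e_b\otimes e^a)\otimes(e_d\otimes e^c)\in\mathrm{End}(T_pM)\otimes\mathrm{End}(T_pM)$ with $\hat R^{bd}_{ac}=g^{bx}R^d_{axc}$. *)

theory Defs
  imports "HOL-Analysis.Analysis"
begin

text \<open>Local-coordinate model of a 2-dimensional pseudo-Riemannian manifold:
  a nonempty connected open set U of R^2 (a chart domain) with a smooth,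
  symmetric, nondegenerate metric g.\<close>

definition pd :: "2 \<Rightarrow> (real^2 \<Rightarrow> real) \<Rightarrow> real^2 \<Rightarrow> real" where
  "pd i f x = deriv (\<lambda>t. f (x + t *\<^sub>R axis i 1)) 0"

fun Ck :: "nat \<Rightarrow> (real^2) set \<Rightarrow> (real^2 \<Rightarrow> real) \<Rightarrow> bool" where
  "Ck 0 U f = continuous_on U f"
| "Ck (Suc k) U f = (continuous_on U f \<and> (\<forall>x\<in>U. f differentiable (at x))
                      \<and> (\<forall>i. Ck k U (pd i f)))"

definition smooth_on :: "(real^2) set \<Rightarrow> (real^2 \<Rightarrow> real) \<Rightarrow> bool" where
  "smooth_on U f = (\<forall>k. Ck k U f)"

definition christoffel :: "(real^2 \<Rightarrow> real^2^2) \<Rightarrow> 2 \<Rightarrow> 2 \<Rightarrow> 2 \<Rightarrow> real^2 \<Rightarrow> real" where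
  "christoffel g k i j x = (1/2) * (\<Sum>l\<in>UNIV. matrix_inv (g x) $ k $ l *
      (pd i (\<lambda>y. g y $ j $ l) x + pd j (\<lambda>y. g y $ i $ l) x - pd l (\<lambda>y. g y $ i $ j) x))"

text \<open>R^d_abc with R(e_a,e_b)e_c = R^d_abc e_d,
  R(X,Y)Z = nabla_X nabla_Y Z - nabla_Y nabla_X Z - nabla_[X,Y] Z.\<close>
definition curv :: "(real^2 \<Rightarrow> real^2^2) \<Rightarrow> 2 \<Rightarrow> 2 \<Rightarrow> 2 \<Rightarrow> 2 \<Rightarrow> real^2 \<Rightarrow> real" where
  "curv g d a b c x =
     pd a (christoffel g d b c) x - pd b (christoffel g d a c) x
     + (\<Sum>e\<in>UNIV. christoffel g e b c x * christoffel g d a e x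
                 - christoffel g e a c x * christoffel g d b e x)"

definition nabla_curv :: "(real^2 \<Rightarrow> real^2^2) \<Rightarrow> 2 \<Rightarrow> 2 \<Rightarrow> 2 \<Rightarrow> 2 \<Rightarrow> 2 \<Rightarrow> real^2 \<Rightarrow> real" where
  "nabla_curv g f d a b c x =
     pd f (curv g d a b c) x
     + (\<Sum>e\<in>UNIV. christoffel g d f e x * curv g e a b c x
                 - christoffel g e f a x * curv g d e b c x
                 - christoffel g e f b x * curv g d a e c x
                 - christoffel g e f c x * curv g d a b e x)"

definition locally_symmetric_chart :: "(real^2) set \<Rightarrow> (real^2 \<Rightarrow> real^2^2) \<Rightarrow> bool" where
  "locally_symmetric_chart U g \<longleftrightarrow>
     open U \<and> connected U \<and> U \<noteq> {} \<and>
     (\<forall>i j. smooth_on U (\<lambda>x. g x $ i $ j)) \<and>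
     (\<forall>x\<in>U. transpose (g x) = g x \<and> det (g x) \<noteq> 0) \<and>
     (\<forall>x\<in>U. \<forall>f d a b c. nabla_curv g f d a b c x = 0)"

text \<open>hat R^{bd}_{ac} = g^{bx} R^d_{axc}; \<open>Rhat g b a d c x\<close> is the coefficient of
  (e_b \<otimes> e^a) \<otimes> (e_d \<otimes> e^c).\<close>
definition Rhat :: "(real^2 \<Rightarrow> real^2^2) \<Rightarrow> 2 \<Rightarrow> 2 \<Rightarrow> 2 \<Rightarrow> 2 \<Rightarrow> real^2 \<Rightarrow> real" where
  "Rhat g b a d c x = (\<Sum>y\<in>UNIV. matrix_inv (g x) $ b $ y * curv g d a y c x)"

definition matH :: "real^2^2" where
  "matH = (\<chi> i j. if i = j then (if i = 1 then 1 else -1) else 0)"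
definition matE :: "real^2^2" where
  "matE = (\<chi> i j. if i = 1 \<and> j = 2 then 1 else 0)"
definition matF :: "real^2^2" where
  "matF = (\<chi> i j. if i = 2 \<and> j = 1 then 1 else 0)"

text \<open>Components of (rho \<otimes> rho)(C) = 1/2 H\<otimes>H + E\<otimes>F + F\<otimes>E in End(V)\<otimes>End(V):
  coefficient of (e_b \<otimes> e^a) \<otimes> (e_d \<otimes> e^c).\<close>
definition casimir_weight :: "2 \<Rightarrow> 2 \<Rightarrow> 2 \<Rightarrow> 2 \<Rightarrow> real" where
  "casimir_weight b a d c =
     (1/2) * matH $ b $ a * matH $ d $ c + matE $ b $ a * matF $ d $ c + matF $ b $ a * matE $ d $ c"

text \<open>Isomorphism End(V)\<otimes>End(V) \<rightarrow> End(W)\<otimes>End(W) induced by an isomorphism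
  phi: V \<rightarrow> W with matrix P (A \<otimes> B \<mapsto> P A P^-1 \<otimes> P B P^-1), in components.\<close>
definition transport :: "real^2^2 \<Rightarrow> (2 \<Rightarrow> 2 \<Rightarrow> 2 \<Rightarrow> 2 \<Rightarrow> real) \<Rightarrow> 2 \<Rightarrow> 2 \<Rightarrow> 2 \<Rightarrow> 2 \<Rightarrow> real" where
  "transport P T b a d c =
     (\<Sum>b'\<in>UNIV. \<Sum>a'\<in>UNIV. \<Sum>d'\<in>UNIV. \<Sum>c'\<in>UNIV.
        P $ b $ b' * matrix_inv P $ a' $ a * P $ d $ d' * matrix_inv P $ c' $ c * T b' a' d' c')"

end

theory Submission
  imports Defs
begin

text \<open>In dimension two the curvature tensor R^d_{abc} is antisymmetric in a, b and hence
  determined by the single slice R^d_{12c}. Consequently hat R = X \<otimes> Y is a pure tensor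
  in End(T_pM) \<otimes> End(T_pM), at every point of every pseudo-Riemannian surface. Transporting along an isomorphism acts on the two tensor factors
  separately and invertibly, so it preserves and reflects purity. But the Casimir weight
  1/2 H\<otimes>H + E\<otimes>F + F\<otimes>E is not pure: its H\<otimes>H and E\<otimes>F coefficients are nonzero
  while its H\<otimes>F coefficient vanishes.\<close>

lemma matrix_inv_cancel:
  fixes P :: "'a::semiring_1^'n^'n"
  assumes "invertible P"
  shows "P ** matrix_inv P = mat 1" and "matrix_inv P ** P = mat 1"
  using someI_ex[OF assms[unfolded invertible_def]] unfolding matrix_inv_def by auto

lemma invertible_matrix_inv:
  fixes P :: "'a::semiring_1^'n^'n"
  assumes "invertible P"
  shows "invertible (matrix_inv P)"
  using matrix_inv_cancel[OF assms] unfolding invertible_def by blast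

lemma matrix_inv_matrix_inv:
  fixes P :: "'a::semiring_1^'n^'n"
  assumes "invertible P"
  shows "matrix_inv (matrix_inv P) = P"
proof -
  have "matrix_inv (matrix_inv P) = matrix_inv (matrix_inv P) ** (matrix_inv P ** P)"
    by (simp add: matrix_inv_cancel[OF assms])
  also have "\<dots> = P"
    by (simp add: matrix_mul_assoc matrix_inv_cancel[OF invertible_matrix_inv[OF assms]])
  finally show ?thesis .
qed

type_synonym 'n endo_tensor = "'n \<Rightarrow> 'n \<Rightarrow> 'n \<Rightarrow> 'n \<Rightarrow> real"

definition pure_tensor :: "'n endo_tensor \<Rightarrow> bool" where
  "pure_tensor T \<longleftrightarrow> (\<exists>X Y. \<forall>b a d c. T b a d c = X b a * Y d c)"

definition map_first :: "(real^'n^'n \<Rightarrow> real^'n^'n) \<Rightarrow> 'n endo_tensor \<Rightarrow> 'n endo_tensor" where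
  "map_first f T = (\<lambda>b a d c. f (\<chi> b' a'. T b' a' d c) $ b $ a)"

definition map_second :: "(real^'n^'n \<Rightarrow> real^'n^'n) \<Rightarrow> 'n endo_tensor \<Rightarrow> 'n endo_tensor" where
  "map_second f T = (\<lambda>b a d c. f (\<chi> d' c'. T b a d' c') $ d $ c)"

lemma map_first_comp: "map_first f (map_first g T) = map_first (f \<circ> g) T"
  by (simp add: map_first_def)

lemma map_second_comp: "map_second f (map_second g T) = map_second (f \<circ> g) T"
  by (simp add: map_second_def)

lemma map_first_id: "map_first id T = T"
  by (simp add: map_first_def)

lemma map_second_id: "map_second id T = T"
  by (simp add: map_second_def)

lemma pure_tensor_map_first:
  assumes "linear f" and "pure_tensor T"
  shows "pure_tensor (map_first f T)"
proof -
  obtain X Y where T: "\<And>b a d c. T b a d c = X b a * Y d c"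
    using assms(2) unfolding pure_tensor_def by blast
  have "(\<chi> b' a'. T b' a' d c) = Y d c *\<^sub>R (\<chi> b' a'. X b' a')" for d c
    by (simp add: T vec_eq_iff)
  then have "map_first f T b a d c = f (\<chi> b' a'. X b' a') $ b $ a * Y d c" for b a d c
    by (simp add: map_first_def linear_cmul[OF assms(1)])
  then show ?thesis
    unfolding pure_tensor_def by (intro exI allI)
qed

lemma pure_tensor_map_second:
  assumes "linear f" and "pure_tensor T"
  shows "pure_tensor (map_second f T)"
proof -
  obtain X Y where T: "\<And>b a d c. T b a d c = X b a * Y d c"
    using assms(2) unfolding pure_tensor_def by blast
  have "(\<chi> d' c'. T b a d' c') = X b a *\<^sub>R (\<chi> d' c'. Y d' c')" for b a
    by (simp add: T vec_eq_iff)
  then have "map_second f T b a d c = X b a * f (\<chi> d' c'. Y d' c') $ d $ c" for b a d c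
    by (simp add: map_second_def linear_cmul[OF assms(1)])
  then show ?thesis
    unfolding pure_tensor_def by (intro exI allI)
qed

definition conjugate :: "real^'n^'n \<Rightarrow> real^'n^'n \<Rightarrow> real^'n^'n" where
  "conjugate P A = P ** A ** matrix_inv P"

lemma linear_conjugate: "linear (conjugate P)"
  by (rule linearI)
    (simp_all add: conjugate_def matrix_matrix_mult_def vec_eq_iff sum.distrib
      sum_distrib_left algebra_simps)

lemma conjugate_matrix_inv_conjugate:
  assumes "invertible P"
  shows "conjugate (matrix_inv P) \<circ> conjugate P = id"
proof
  fix A
  have "matrix_inv P ** (P ** A ** matrix_inv P) ** P = (matrix_inv P ** P) ** A ** (matrix_inv P ** P)"
    by (simp add: matrix_mul_assoc)
  then show "(conjugate (matrix_inv P) \<circ> conjugate P) A = id A"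
    by (simp add: conjugate_def matrix_inv_matrix_inv[OF assms] matrix_inv_cancel[OF assms])
qed

lemma pure_tensor_conjugate_both_iff:
  assumes "invertible P"
  shows "pure_tensor (map_first (conjugate P) (map_second (conjugate P) T)) \<longleftrightarrow> pure_tensor T"
proof
  assume "pure_tensor (map_first (conjugate P) (map_second (conjugate P) T))"
  then have "pure_tensor (map_first (conjugate (matrix_inv P) \<circ> conjugate P) (map_second (conjugate P) T))"
    using pure_tensor_map_first[OF linear_conjugate] by (simp only: map_first_comp[symmetric])
  then have "pure_tensor (map_second (conjugate P) T)"
    by (simp add: conjugate_matrix_inv_conjugate[OF assms] map_first_id)
  then have "pure_tensor (map_second (conjugate (matrix_inv P) \<circ> conjugate P) T)"
    using pure_tensor_map_second[OF linear_conjugate] by (simp only: map_second_comp[symmetric])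
  then show "pure_tensor T"
    by (simp add: conjugate_matrix_inv_conjugate[OF assms] map_second_id)
next
  assume "pure_tensor T"
  then show "pure_tensor (map_first (conjugate P) (map_second (conjugate P) T))"
    by (intro pure_tensor_map_first pure_tensor_map_second linear_conjugate)
qed

lemma transport_eq_conjugate_both:
  "transport P T = map_first (conjugate P) (map_second (conjugate P) T)"
  by (simp add: fun_eq_iff transport_def map_first_def map_second_def conjugate_def
      matrix_matrix_mult_def sum_2 algebra_simps)

lemma pure_tensor_transport_iff:
  assumes "invertible P"
  shows "pure_tensor (transport P T) \<longleftrightarrow> pure_tensor T"
  by (simp add: transport_eq_conjugate_both pure_tensor_conjugate_both_iff[OF assms])

lemma casimir_weight_not_pure: "\<not> pure_tensor casimir_weight"
proof
  assume "pure_tensor casimir_weight"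
  then obtain X Y where C: "\<And>b a d c. casimir_weight b a d c = X b a * Y d c"
    unfolding pure_tensor_def by blast
  have "X 1 1 * Y 1 1 = 1/2" "X 1 2 * Y 2 1 = 1" "X 1 1 * Y 2 1 = 0"
    using C[of 1 1 1 1] C[of 1 2 2 1] C[of 1 1 2 1]
    by (simp_all add: casimir_weight_def matH_def matE_def matF_def)
  then show False
    by (metis mult_eq_0_iff zero_neq_one divide_eq_0_iff zero_neq_numeral)
qed

lemma curv_antisym: "curv g d a b c x = - curv g d b a c x"
  unfolding curv_def by (simp add: algebra_simps sum_subtractf)

lemma curv_eq_sign_curv_12:
  "curv g d a b c x = (if a = b then 0 else if a = 1 then 1 else -1) * curv g d 1 2 c x"
proof -
  have "curv g d a a c x = 0" "curv g d 2 1 c x = - curv g d 1 2 c x"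
    using curv_antisym[of g d a a c x] curv_antisym[of g d 2 1 c x] by simp_all
  then show ?thesis
    using exhaust_2[of a] exhaust_2[of b] by fastforce
qed

lemma pure_tensor_Rhat: "pure_tensor (\<lambda>b a d c. Rhat g b a d c p)"
proof -
  let ?ginv = "matrix_inv (g p)"
  have "Rhat g b a d c p = (if a = 1 then ?ginv $ b $ 2 else - ?ginv $ b $ 1) * curv g d 1 2 c p"
    for b a d c
    using exhaust_2[of a] by (auto simp: Rhat_def sum_2 curv_eq_sign_curv_12[of g d a])
  then show ?thesis
    unfolding pure_tensor_def by (intro exI allI)
qed

theorem mainTheorem7:
  shows "\<not> (\<exists>(U :: (real^2) set) g p (P :: real^2^2).
            locally_symmetric_chart U g \<and> p \<in> U \<and> invertible P \<and>
            (\<forall>b a d c. Rhat g b a d c p = transport P casimir_weight b a d c))"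
proof -
  have "pure_tensor (transport P casimir_weight)"
    if "\<forall>b a d c. Rhat g b a d c p = transport P casimir_weight b a d c" for g p P
  proof -
    have "(\<lambda>b a d c. Rhat g b a d c p) = transport P casimir_weight"
      using that by (simp add: fun_eq_iff)
    then show ?thesis
      using pure_tensor_Rhat by metis
  qed
  moreover have "\<not> pure_tensor (transport P casimir_weight)" if "invertible P" for P :: "real^2^2"
    by (simp add: pure_tensor_transport_iff[OF that] casimir_weight_not_pure)
  ultimately show ?thesis
    by blast
qed

end
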